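(* Let $\Gamma=(\mathcal{G},\mathcal{I},\boldsymbol{c})$ be a nonatomic routing game with BPR-type cost functions (i.e., there is $\beta\in\mathbb{R}_+$ such that $c_e(x)=t_e+a_ex^{\beta}$ with $t_e,a_e\in\mathbb{R}_+$ for every edge $e$) and a single origin-destination pair. Then there exists a demand-independent optimal toll (DIOT) $\boldsymbol{\tau}$ for $\Gamma$ that satisfies the budget constraint $\sum_{e\in\mathcal{E}}\tau_ex_e\ge0$ for every feasible flow $\boldsymbol{f}$ (for any demand), where $x_e$ is the load induced by $\boldsymbol{f}$.
   Context: A nonatomic routing game $\Gamma=(\mathcal{G},\mathcal{I},\boldsymbol{c})$ consists of a finite directed multigraph $\mathcal{G}=(\mathcal{V},\mathcal{E})$, a finite set $\mathcal{I}$ of origin-destination pairs $i$ with origin $o^i$ and destination $d^i$, and nondecreasing continuous cost functions $c_e:\mathbb{R}_+\to\mathbb{R}_+$. $\mathcal{P}^i$ is the set of simple $o^i$–$d^i$ paths. For a demand vector $\boldsymbol{\mu}\in\mathbb{R}_+^{\mathcal{I}}$, feasible flows are $\boldsymbol{f}\in\mathbb{R}_+^{\mathcal{P}}$ with $\sum_{p\in\mathcal{P}^i}f_p=\mu^i$; loads $x_e=\sum_{p\ni e}f_p$; path costs $c_p=\sum_{e\in p}c_e(x_e)$. A Wardrop equilibrium is a feasible flow where every used path of each pair $i$ has cost at most that of any other path in $\mathcal{P}^i$. The total cost is $L(\boldsymbol{f})=\sum_p f_pc_p(\boldsymbol{f})$; a system optimum minimizes $L$ over feasible flows. For a toll vector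 $\boldsymbol{\tau}\in\mathbb{R}^{\mathcal{E}}$ (entries may be negative), $\Gamma^{\boldsymbol{\tau}}$ has edge costs $c_e(x)+\tau_e$. $\boldsymbol{\tau}$ is a DIOT for $\Gamma$ if for every demand vector $\boldsymbol{\mu}\in\mathbb{R}_+^{\mathcal{I}}$ every Wardrop equilibrium of $\Gamma^{\boldsymbol{\tau}}$ with demand $\boldsymbol{\mu}$ is a system optimum of $\Gamma$ for demand $\boldsymbol{\mu}$. *)

theory Defs
  imports Complex_Main
begin

text \<open>A directed multigraph is given by a finite edge set E with source/target maps
  src, tgt :: 'e \<Rightarrow> 'v. A path is a list of edges.\<close>

fun is_walk :: "('e \<Rightarrow> 'v) \<Rightarrow> ('e \<Rightarrow> 'v) \<Rightarrow> 'v \<Rightarrow> 'e list \<Rightarrow> 'v \<Rightarrow> bool" where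
  "is_walk src tgt u [] v = (u = v)"
| "is_walk src tgt u (e # p) v = (src e = u \<and> is_walk src tgt (tgt e) p v)"

definition od_paths :: "'e set \<Rightarrow> ('e \<Rightarrow> 'v) \<Rightarrow> ('e \<Rightarrow> 'v) \<Rightarrow> 'v \<Rightarrow> 'v \<Rightarrow> 'e list set" where
  "od_paths E src tgt orig dest = {p. set p \<subseteq> E \<and> is_walk src tgt orig p dest \<and> distinct (orig # map tgt p)}"

definition load :: "'e list set \<Rightarrow> ('e list \<Rightarrow> real) \<Rightarrow> 'e \<Rightarrow> real" where
  "load P f e = (\<Sum>p\<in>P. if e \<in> set p then f p else 0)"

definition path_cost :: "'e list set \<Rightarrow> ('e \<Rightarrow> real \<Rightarrow> real) \<Rightarrow> ('e list \<Rightarrow> real) \<Rightarrow> 'e list \<Rightarrow> real" where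
  "path_cost P c f p = (\<Sum>e\<leftarrow>p. c e (load P f e))"

definition feasible :: "'e list set \<Rightarrow> real \<Rightarrow> ('e list \<Rightarrow> real) \<Rightarrow> bool" where
  "feasible P \<mu> f \<longleftrightarrow> (\<forall>p\<in>P. f p \<ge> 0) \<and> (\<Sum>p\<in>P. f p) = \<mu>"

definition total_cost :: "'e list set \<Rightarrow> ('e \<Rightarrow> real \<Rightarrow> real) \<Rightarrow> ('e list \<Rightarrow> real) \<Rightarrow> real" where
  "total_cost P c f = (\<Sum>p\<in>P. f p * path_cost P c f p)"

definition wardrop :: "'e list set \<Rightarrow> ('e \<Rightarrow> real \<Rightarrow> real) \<Rightarrow> real \<Rightarrow> ('e list \<Rightarrow> real) \<Rightarrow> bool" where
  "wardrop P c \<mu> f \<longleftrightarrow> feasible P \<mu> f \<and>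
     (\<forall>p\<in>P. f p > 0 \<longrightarrow> (\<forall>q\<in>P. path_cost P c f p \<le> path_cost P c f q))"

definition system_optimum :: "'e list set \<Rightarrow> ('e \<Rightarrow> real \<Rightarrow> real) \<Rightarrow> real \<Rightarrow> ('e list \<Rightarrow> real) \<Rightarrow> bool" where
  "system_optimum P c \<mu> f \<longleftrightarrow> feasible P \<mu> f \<and>
     (\<forall>g. feasible P \<mu> g \<longrightarrow> total_cost P c f \<le> total_cost P c g)"

definition is_DIOT :: "'e list set \<Rightarrow> ('e \<Rightarrow> real \<Rightarrow> real) \<Rightarrow> ('e \<Rightarrow> real) \<Rightarrow> bool" where
  "is_DIOT P c \<tau> \<longleftrightarrow> (\<forall>\<mu>\<ge>0. \<forall>f. wardrop P (\<lambda>e x. c e x + \<tau> e) \<mu> f \<longrightarrow> system_optimum P c \<mu> f)"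

text \<open>x^beta with the convention x^0 = 1 (also at x = 0).\<close>
definition rpow :: "real \<Rightarrow> real \<Rightarrow> real" where
  "rpow x \<beta> = (if \<beta> = 0 then 1 else x powr \<beta>)"

definition bpr_cost :: "('e \<Rightarrow> real) \<Rightarrow> ('e \<Rightarrow> real) \<Rightarrow> real \<Rightarrow> 'e \<Rightarrow> real \<Rightarrow> real" where
  "bpr_cost t a \<beta> e x = t e + a e * rpow x \<beta>"

end

theory Submission
  imports Defs "HOL-Analysis.Analysis"
begin

text \<open>With \<open>c\<^sub>e(x) = t\<^sub>e + a\<^sub>e x\<^sup>\<beta>\<close>, the marginal cost \<open>(x c\<^sub>e(x))' = t\<^sub>e + (1 + \<beta>) a\<^sub>e x\<^sup>\<beta>\<close> is
  \<open>(1 + \<beta>)\<close> times the BPR cost with free-flow times \<open>t\<^sub>e / (1 + \<beta>)\<close>. Hence the toll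
  \<open>-\<beta>/(1 + \<beta>) t\<^sub>e\<close> turns every equilibrium into an equilibrium for (scaled) marginal costs,
  for every demand, and by convexity of \<open>x c\<^sub>e(x)\<close> such a flow is a system optimum. Adding
  a potential difference \<open>\<pi>(tgt e) - \<pi>(src e)\<close> shifts all path costs by the same constant and
  so changes no equilibrium; with \<open>\<pi>(dest) = \<beta>/(1 + \<beta>) \<Sum>\<^sub>e t\<^sub>e\<close> and \<open>\<pi> = 0\<close> elsewhere, the toll
  along every simple path is nonnegative, which gives the budget constraint.\<close>

lemma walk_sum_potential_diff:
  "is_walk src tgt u p v \<Longrightarrow> (\<Sum>e\<leftarrow>p. \<pi> (tgt e) - \<pi> (src e)) = \<pi> v - (\<pi> u :: real)"
  by (induction p arbitrary: u) auto

lemma is_walk_last_tgt: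
  "is_walk src tgt u p v \<Longrightarrow> p \<noteq> [] \<Longrightarrow> tgt (last p) = v"
proof (induction p arbitrary: u)
  case (Cons e p)
  then show ?case by (cases p) auto
qed simp

lemma od_pathsD:
  assumes "p \<in> od_paths E src tgt orig dest"
  shows "set p \<subseteq> E" "distinct p" "is_walk src tgt orig p dest"
  using assms unfolding od_paths_def by (auto simp: distinct_map)

lemma finite_od_paths:
  assumes "finite E"
  shows "finite (od_paths E src tgt orig dest)"
proof -
  have "od_paths E src tgt orig dest \<subseteq> {xs. set xs \<subseteq> E \<and> length xs \<le> card E}"
  proof
    fix p assume "p \<in> od_paths E src tgt orig dest"
    then have "set p \<subseteq> E" "distinct p" by (rule od_pathsD)+
    then show "p \<in> {xs. set xs \<subseteq> E \<and> length xs \<le> card E}"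
      using assms by (metis card_mono distinct_card mem_Collect_eq)
  qed
  then show ?thesis
    using finite_subset finite_lists_length_le[OF assms] by blast
qed

lemma od_paths_closed_Nil:
  assumes "p \<in> od_paths E src tgt v v"
  shows "p = []"
proof (rule ccontr)
  assume "p \<noteq> []"
  moreover have "is_walk src tgt v p v" and "distinct (v # map tgt p)"
    using assms unfolding od_paths_def by auto
  ultimately show False
    using is_walk_last_tgt[of src tgt v p v] by (auto simp: last_in_set)
qed

lemma sum_path_weight_eq_sum_load:
  assumes "finite P" "finite E" "\<forall>p\<in>P. set p \<subseteq> E \<and> distinct p"
  shows "(\<Sum>p\<in>P. f p * (\<Sum>e\<leftarrow>p. w e)) = (\<Sum>e\<in>E. w e * load P f e)"
proof -
  have "(\<Sum>e\<leftarrow>p. w e) = (\<Sum>e\<in>E. if e \<in> set p then w e else 0)" if "p \<in> P" for p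
    using assms that
    by (simp add: sum_list_distinct_conv_sum_set sum.If_cases Int_absorb1 inf_commute)
  then have "(\<Sum>p\<in>P. f p * (\<Sum>e\<leftarrow>p. w e))
      = (\<Sum>p\<in>P. \<Sum>e\<in>E. if e \<in> set p then f p * w e else 0)"
    by (simp add: sum_distrib_left if_distrib cong: if_cong)
  also have "\<dots> = (\<Sum>e\<in>E. \<Sum>p\<in>P. if e \<in> set p then f p * w e else 0)"
    by (rule sum.swap)
  also have "\<dots> = (\<Sum>e\<in>E. w e * load P f e)"
    unfolding load_def by (simp add: sum_distrib_left if_distrib mult.commute cong: if_cong)
  finally show ?thesis .
qed

lemma load_nonneg: "\<forall>p\<in>P. f p \<ge> 0 \<Longrightarrow> load P f e \<ge> 0"
  unfolding load_def by (auto intro: sum_nonneg)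

lemma total_cost_eq_sum_edges:
  assumes "finite P" "finite E" "\<forall>p\<in>P. set p \<subseteq> E \<and> distinct p"
  shows "total_cost P c f = (\<Sum>e\<in>E. c e (load P f e) * load P f e)"
  unfolding total_cost_def path_cost_def by (rule sum_path_weight_eq_sum_load[OF assms])

lemma wardrop_variational_ineq:
  assumes "finite P" "wardrop P c \<mu> f" "feasible P \<mu> g"
  shows "total_cost P c f \<le> (\<Sum>p\<in>P. g p * path_cost P c f p)"
proof -
  define C where "C = path_cost P c f"
  have ff: "feasible P \<mu> f" and W: "\<forall>p\<in>P. f p > 0 \<longrightarrow> (\<forall>q\<in>P. C p \<le> C q)"
    using assms(2) unfolding wardrop_def C_def by auto
  show ?thesis
  proof (cases "\<exists>p\<in>P. f p > 0")
    case True
    then obtain p0 where p0: "p0 \<in> P" "f p0 > 0" by blast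
    have same_cost: "f p * C p = f p * C p0" if "p \<in> P" for p
      using W p0 that ff unfolding feasible_def by (smt (verit) mult_eq_0_iff)
    have "total_cost P c f = (\<Sum>p\<in>P. f p * C p0)"
      unfolding total_cost_def C_def[symmetric] by (rule sum.cong[OF refl same_cost])
    also have "\<dots> = (\<Sum>p\<in>P. g p * C p0)"
      using ff assms(3) unfolding feasible_def by (simp add: sum_distrib_right[symmetric])
    also have "\<dots> \<le> (\<Sum>p\<in>P. g p * C p)"
      using assms(3) W p0 unfolding feasible_def by (intro sum_mono) (simp add: mult_left_mono)
    finally show ?thesis unfolding C_def .
  next
    case False
    then have f0: "\<forall>p\<in>P. f p = 0" using ff unfolding feasible_def by force
    then have "\<mu> = 0" using ff unfolding feasible_def by simp
    then have "\<forall>p\<in>P. g p = 0"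
      using assms(1,3) sum_nonneg_eq_0_iff unfolding feasible_def by blast
    with f0 show ?thesis unfolding total_cost_def by simp
  qed
qed

lemma wardrop_add_potential_toll_iff:
  assumes "\<forall>p\<in>P. is_walk src tgt orig p dest"
  shows "wardrop P (\<lambda>e x. c e x + (\<pi> (tgt e) - \<pi> (src e))) \<mu> f \<longleftrightarrow> wardrop P c \<mu> f"
proof -
  have "path_cost P (\<lambda>e x. c e x + (\<pi> (tgt e) - \<pi> (src e))) f p
      = path_cost P c f p + (\<pi> dest - \<pi> orig)" if "p \<in> P" for p
    using assms that unfolding path_cost_def by (simp add: sum_list_addf walk_sum_potential_diff)
  then show ?thesis unfolding wardrop_def by auto
qed

lemma times_rpow_tangent:
  fixes x y \<beta> :: real
  assumes "x \<ge> 0" "y \<ge> 0" "\<beta> \<ge> 0"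
  shows "x * rpow x \<beta> + (1 + \<beta>) * rpow x \<beta> * (y - x) \<le> y * rpow y \<beta>"
proof (cases "\<beta> = 0")
  case True
  then show ?thesis by (simp add: rpow_def)
next
  case False
  then have b: "\<beta> > 0" using assms by simp
  define q where "q = (1 + \<beta>) / \<beta>"
  have "y * x powr \<beta> \<le> y powr (1 + \<beta>) / (1 + \<beta>) + (x powr \<beta>) powr q / q"
    by (rule Youngs_inequality) (use b assms in \<open>auto simp: q_def field_simps\<close>)
  moreover have "(x powr \<beta>) powr q = x powr (1 + \<beta>)"
    using b by (simp add: powr_powr q_def)
  ultimately have "y * x powr \<beta> \<le> y powr (1 + \<beta>) / (1 + \<beta>) + x powr (1 + \<beta>) * (\<beta> / (1 + \<beta>))"
    by (simp add: q_def)
  then have "(1 + \<beta>) * (y * x powr \<beta>)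
      \<le> (1 + \<beta>) * (y powr (1 + \<beta>) / (1 + \<beta>) + x powr (1 + \<beta>) * (\<beta> / (1 + \<beta>)))"
    using b by (intro mult_left_mono) auto
  also have "\<dots> = y powr (1 + \<beta>) + \<beta> * x powr (1 + \<beta>)"
    using b by (simp add: distrib_left)
  finally have "(1 + \<beta>) * (y * x powr \<beta>) \<le> y powr (1 + \<beta>) + \<beta> * x powr (1 + \<beta>)" .
  moreover have "x * x powr \<beta> = x powr (1 + \<beta>)" "y * y powr \<beta> = y powr (1 + \<beta>)"
    using assms by (simp_all add: powr_add)
  ultimately show ?thesis using False unfolding rpow_def by (simp add: algebra_simps)
qed

lemma bpr_cost_marginal_tangent:
  assumes "x \<ge> 0" "y \<ge> 0" "\<beta> \<ge> 0" "a e \<ge> 0"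
  shows "(1 + \<beta>) * bpr_cost (\<lambda>e. t e / (1 + \<beta>)) a \<beta> e x * (y - x)
    \<le> bpr_cost t a \<beta> e y * y - bpr_cost t a \<beta> e x * x"
proof -
  have "a e * (x * rpow x \<beta> + (1 + \<beta>) * rpow x \<beta> * (y - x)) \<le> a e * (y * rpow y \<beta>)"
    using times_rpow_tangent[OF assms(1-3)] assms(4) by (rule mult_left_mono)
  moreover have "(1 + \<beta>) * bpr_cost (\<lambda>e. t e / (1 + \<beta>)) a \<beta> e x = t e + (1 + \<beta>) * a e * rpow x \<beta>"
    using assms(3) unfolding bpr_cost_def by (simp add: distrib_left)
  ultimately show ?thesis
    unfolding bpr_cost_def by (simp add: algebra_simps)
qed

lemma bpr_sum_edge_cost_le_if_marginal_ineq:
  fixes x y :: "'e \<Rightarrow> real"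
  assumes "\<beta> \<ge> 0" "\<forall>e\<in>E. a e \<ge> 0" "\<forall>e. x e \<ge> 0" "\<forall>e. y e \<ge> 0"
    and "(\<Sum>e\<in>E. bpr_cost (\<lambda>e. t e / (1 + \<beta>)) a \<beta> e (x e) * x e)
      \<le> (\<Sum>e\<in>E. bpr_cost (\<lambda>e. t e / (1 + \<beta>)) a \<beta> e (x e) * y e)"
  shows "(\<Sum>e\<in>E. bpr_cost t a \<beta> e (x e) * x e) \<le> (\<Sum>e\<in>E. bpr_cost t a \<beta> e (y e) * y e)"
proof -
  let ?m = "\<lambda>e. (1 + \<beta>) * bpr_cost (\<lambda>e. t e / (1 + \<beta>)) a \<beta> e (x e) * (y e - x e)"
  have "0 \<le> (1 + \<beta>) * ((\<Sum>e\<in>E. bpr_cost (\<lambda>e. t e / (1 + \<beta>)) a \<beta> e (x e) * y e)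
      - (\<Sum>e\<in>E. bpr_cost (\<lambda>e. t e / (1 + \<beta>)) a \<beta> e (x e) * x e))"
    using assms(1,5) by simp
  also have "\<dots> = (\<Sum>e\<in>E. ?m e)"
    by (simp add: sum_distrib_left sum_subtractf[symmetric] algebra_simps)
  also have "\<dots> \<le> (\<Sum>e\<in>E. bpr_cost t a \<beta> e (y e) * y e - bpr_cost t a \<beta> e (x e) * x e)"
    using assms(1-4) by (intro sum_mono bpr_cost_marginal_tangent) auto
  finally show ?thesis by (simp add: sum_subtractf)
qed

lemma bpr_potential_marginal_toll_is_DIOT:
  fixes \<pi> :: "'v \<Rightarrow> real"
  assumes "finite E" "\<beta> \<ge> 0" "\<forall>e\<in>E. a e \<ge> 0"
    and \<tau>: "\<And>e. \<tau> e = \<pi> (tgt e) - \<pi> (src e) - \<beta> / (1 + \<beta>) * t e"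
  shows "is_DIOT (od_paths E src tgt orig dest) (bpr_cost t a \<beta>) \<tau>"
  unfolding is_DIOT_def
proof (intro allI impI)
  fix \<mu> :: real and f
  let ?P = "od_paths E src tgt orig dest"
  define c' where "c' = bpr_cost (\<lambda>e. t e / (1 + \<beta>)) a \<beta>"
  have finP: "finite ?P"
    using assms(1) by (rule finite_od_paths)
  have PE: "\<forall>p\<in>?P. set p \<subseteq> E \<and> distinct p" and PW: "\<forall>p\<in>?P. is_walk src tgt orig p dest"
    by (simp_all add: od_pathsD)
  have "bpr_cost t a \<beta> e x + \<tau> e = c' e x + (\<pi> (tgt e) - \<pi> (src e))" for e x
  proof -
    have "t e / (1 + \<beta>) = t e - \<beta> / (1 + \<beta>) * t e"
      using assms(2) by (simp add: field_simps)
    then show ?thesis unfolding \<tau> c'_def bpr_cost_def by linarith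
  qed
  moreover assume "wardrop ?P (\<lambda>e x. bpr_cost t a \<beta> e x + \<tau> e) \<mu> f"
  ultimately have W: "wardrop ?P c' \<mu> f"
    using wardrop_add_potential_toll_iff[OF PW] by simp
  then have ff: "feasible ?P \<mu> f" unfolding wardrop_def by blast
  show "system_optimum ?P (bpr_cost t a \<beta>) \<mu> f"
    unfolding system_optimum_def
  proof (intro conjI allI impI ff)
    fix g assume fg: "feasible ?P \<mu> g"
    have "(\<Sum>e\<in>E. c' e (load ?P f e) * load ?P f e) \<le> (\<Sum>e\<in>E. c' e (load ?P f e) * load ?P g e)"
      using wardrop_variational_ineq[OF finP W fg]
      unfolding total_cost_eq_sum_edges[OF finP assms(1) PE] path_cost_def
        sum_path_weight_eq_sum_load[OF finP assms(1) PE] .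
    then show "total_cost ?P (bpr_cost t a \<beta>) f \<le> total_cost ?P (bpr_cost t a \<beta>) g"
      using ff fg assms(2,3) unfolding total_cost_eq_sum_edges[OF finP assms(1) PE] c'_def
      by (intro bpr_sum_edge_cost_le_if_marginal_ineq) (auto simp: feasible_def load_nonneg)
  qed
qed

lemma path_toll_nonneg:
  fixes t :: "'e \<Rightarrow> real"
  assumes "finite E" "\<beta> \<ge> 0" "\<forall>e\<in>E. t e \<ge> 0"
    and p: "p \<in> od_paths E src tgt orig dest"
    and \<tau>: "\<And>e. \<tau> e = \<pi> (tgt e) - \<pi> (src e) - \<beta> / (1 + \<beta>) * t e"
    and \<pi>: "\<And>v. \<pi> v = (if v = dest then \<beta> / (1 + \<beta>) * sum t E else 0)"
  shows "(\<Sum>e\<leftarrow>p. \<tau> e) \<ge> 0"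
proof (cases "orig = dest")
  case True
  then have "p = []" using p od_paths_closed_Nil by metis
  then show ?thesis by simp
next
  case False
  have "(\<Sum>e\<leftarrow>p. \<tau> e) = \<beta> / (1 + \<beta>) * (sum t E - sum t (set p))"
    using False od_pathsD[OF p] walk_sum_potential_diff[of src tgt orig p dest \<pi>]
    unfolding \<tau> \<pi> by (simp add: sum_list_subtractf sum_list_const_mult
      sum_list_distinct_conv_sum_set right_diff_distrib
      sum_divide_distrib[symmetric] sum_distrib_left[symmetric])
  moreover have "sum t (set p) \<le> sum t E"
    using assms(1,3) od_pathsD(1)[OF p] by (intro sum_mono2) auto
  ultimately show ?thesis using assms(2) by simp
qed

theorem corollary10:
  fixes E :: "'e set" and src tgt :: "'e \<Rightarrow> 'v" and orig dest :: 'v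
    and t a :: "'e \<Rightarrow> real" and \<beta> :: real
  assumes "finite E"
    and "\<beta> \<ge> 0"
    and "\<forall>e\<in>E. t e \<ge> 0 \<and> a e \<ge> 0"
  shows "\<exists>\<tau> :: 'e \<Rightarrow> real.
           is_DIOT (od_paths E src tgt orig dest) (bpr_cost t a \<beta>) \<tau> \<and>
           (\<forall>\<mu> f. feasible (od_paths E src tgt orig dest) \<mu> f \<longrightarrow>
              (\<Sum>e\<in>E. \<tau> e * load (od_paths E src tgt orig dest) f e) \<ge> 0)"
proof -
  let ?P = "od_paths E src tgt orig dest"
  define \<pi> where "\<pi> v = (if v = dest then \<beta> / (1 + \<beta>) * sum t E else 0)" for v
  define \<tau> where "\<tau> e = \<pi> (tgt e) - \<pi> (src e) - \<beta> / (1 + \<beta>) * t e" for e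
  have "is_DIOT ?P (bpr_cost t a \<beta>) \<tau>"
    using assms by (intro bpr_potential_marginal_toll_is_DIOT[where \<pi> = \<pi>]) (auto simp: \<tau>_def)
  moreover have "(\<Sum>e\<in>E. \<tau> e * load ?P f e) \<ge> 0" if ff: "feasible ?P \<mu> f" for \<mu> f
  proof -
    have "(\<Sum>e\<in>E. \<tau> e * load ?P f e) = (\<Sum>p\<in>?P. f p * (\<Sum>e\<leftarrow>p. \<tau> e))"
      by (intro sum_path_weight_eq_sum_load[symmetric] finite_od_paths assms(1))
        (blast dest: od_pathsD)
    also have "\<dots> \<ge> 0"
      using ff assms unfolding feasible_def
      by (intro sum_nonneg mult_nonneg_nonneg path_toll_nonneg[OF _ _ _ _ \<tau>_def \<pi>_def]) auto
    finally show ?thesis .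
  qed
  ultimately show ?thesis by blast
qed

end
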